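(* Let $z,w>0$ be such that $\mathrm{DAG}(z,w)<\infty$, and let $G$ be a random labelled DAG drawn from the Boltzmann model with parameters $(z,w)$. Let $N_1,N_2,\dots$ be the sizes of the successive layers $V_1,V_2,\dots$ of the root-layering of $G$ (with $N_i=0$ if the root-layering has fewer than $i$ layers). Then for every $k\ge 1$, all positive integers $n_1,\dots,n_k$ for which the conditioning event has positive probability, and every integer $n_{k+1}\ge 0$, \[\mathbb P_{z,w}[N_{k+1}=n_{k+1}\mid N_1=n_1,\dots,N_k=n_k]=\mathbb P_{z,w}[N_2=n_{k+1}\mid N_1=n_k].\] That is, the sequence of layer sizes is a time-homogeneous Markov chain.
   Context: A labelled DAG with $n$ vertices is a directed acyclic graph on vertex set $\{1,\dots,n\}$ ($n\ge0$). For a DAG $G$ write $v(G)$, $e(G)$, $s(G)$ for its numbers of vertices, edges and sources (vertices of in-degree $0$). The graphic generating function of DAGs is $\mathrm{DAG}(z,w,u)=\sum_G \frac{z^{v(G)}w^{e(G)}u^{s(G)}}{(1+w)^{\binom{v(G)}{2}}v(G)!}$, the sum over all labelled DAGs, and $\mathrm{DAG}(z,w)=\mathrm{DAG}(z,w,1)$. The Boltzmann model with parameters $(z,w)$ is the probability distribution $\mathbb P_{z,w}[G]=\frac{z^{v(G)}w^{e(G)}}{(1+w)^{\binom{v(G)}{2}}v(G)!\,\mathrm{DAG}(z,w)}$ on labelled DAGs. The root-layering of a DAG $G=(V,E)$ is the ordered partition $(V_1,\dots,V_k)$ of $V$ where $V_i$ is the set of sources of the graph obtained from $G$ by deleting $V_1\cup\dots\cup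 V_{i-1}$. *)

theory Defs
  imports Complex_Main
begin

definition dags :: "nat \<Rightarrow> (nat \<times> nat) set set" where
  "dags n = {E. E \<subseteq> {1..n} \<times> {1..n} \<and> acyclic E}"

definition dag_weight :: "real \<Rightarrow> real \<Rightarrow> nat \<Rightarrow> (nat \<times> nat) set \<Rightarrow> real" where
  "dag_weight z w n E = z ^ n * w ^ card E / ((1 + w) ^ (n choose 2) * fact n)"

definition event_mass :: "real \<Rightarrow> real \<Rightarrow> (nat \<Rightarrow> (nat \<times> nat) set \<Rightarrow> bool) \<Rightarrow> real" where
  "event_mass z w P = (\<Sum>n. \<Sum>E\<in>{E \<in> dags n. P n E}. dag_weight z w n E)"

definition DAG_finite :: "real \<Rightarrow> real \<Rightarrow> bool" where
  "DAG_finite z w \<longleftrightarrow> summable (\<lambda>n. \<Sum>E\<in>dags n. dag_weight z w n E)"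

definition DAG_gf :: "real \<Rightarrow> real \<Rightarrow> real" where
  "DAG_gf z w = event_mass z w (\<lambda>_ _. True)"

definition dag_prob :: "real \<Rightarrow> real \<Rightarrow> (nat \<Rightarrow> (nat \<times> nat) set \<Rightarrow> bool) \<Rightarrow> real" where
  "dag_prob z w P = event_mass z w P / DAG_gf z w"

definition dag_cond_prob :: "real \<Rightarrow> real \<Rightarrow> (nat \<Rightarrow> (nat \<times> nat) set \<Rightarrow> bool)
    \<Rightarrow> (nat \<Rightarrow> (nat \<times> nat) set \<Rightarrow> bool) \<Rightarrow> real" where
  "dag_cond_prob z w A B = dag_prob z w (\<lambda>n E. A n E \<and> B n E) / dag_prob z w B"

definition srcs :: "(nat \<times> nat) set \<Rightarrow> nat set \<Rightarrow> nat set" where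
  "srcs E R = {v \<in> R. \<not> (\<exists>u\<in>R. (u, v) \<in> E)}"

fun remaining :: "nat \<Rightarrow> (nat \<times> nat) set \<Rightarrow> nat \<Rightarrow> nat set" where
  "remaining n E 0 = {1..n}"
| "remaining n E (Suc i) = remaining n E i - srcs E (remaining n E i)"

text \<open>Layer V_i (1-indexed, i \<ge> 1); empty once all vertices are removed.\<close>
definition root_layer :: "nat \<Rightarrow> (nat \<times> nat) set \<Rightarrow> nat \<Rightarrow> nat set" where
  "root_layer n E i = srcs E (remaining n E (i - 1))"

definition layer_size :: "nat \<Rightarrow> (nat \<times> nat) set \<Rightarrow> nat \<Rightarrow> nat" where
  "layer_size n E i = card (root_layer n E i)"

end

theory Submission
  imports Defs "HOL-Library.FuncSet" "HOL-Combinatorics.Permutations"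
begin

text \<open>
  Grouping DAGs by their set of sources and relabelling shows that, up to the factor
  binom(n, a), the DAGs whose first layer has size a are those whose sources are the a
  largest labels. Deleting this top layer leaves an arbitrary DAG H on the remaining
  vertices; the edges leaving the top layer are free, except that every source of H has to
  receive one. Summing over them, the Boltzmann mass of the DAGs with first layer of size a
  factorises into the weight of the edgeless graph on a vertices and a sum over H in which H
  carries its own weight times cover_prob w a to the power of its number of sources.
  Iterating, the mass of "the first k layers have sizes n_1, ..., n_k and the later layers
  satisfy R" is a constant depending only on n_1, ..., n_k times the mass, shifted by
  n_1 + ... + n_(k-1) vertices, of "the first layer has size n_k and the layers satisfy R".
  Constant and shift cancel in the conditional probability.
\<close>

definition dag_mass :: "real \<Rightarrow> real \<Rightarrow> nat \<Rightarrow> ((nat \<times> nat) set \<Rightarrow> bool) \<Rightarrow> real" where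
  "dag_mass z w n P = (\<Sum>E\<in>{E \<in> dags n. P E}. dag_weight z w n E)"

text \<open>Counted from 0, since \<^term>\<open>layer_size n E 0\<close> is a junk value equal to
  \<^term>\<open>layer_size n E 1\<close>.\<close>

definition layer_sizes :: "nat \<Rightarrow> (nat \<times> nat) set \<Rightarrow> nat \<Rightarrow> nat" where
  "layer_sizes n E i = layer_size n E (Suc i)"

lemma srcs_subset: "srcs E R \<subseteq> R"
  by (auto simp: srcs_def)

lemma srcs_Int_Times: "R \<subseteq> U \<Longrightarrow> srcs (E \<inter> U \<times> U) R = srcs E R"
  by (auto simp: srcs_def)

lemma remaining_subset: "remaining n E i \<subseteq> {1..n}"
  by (induction i) auto

lemma finite_dags: "finite (dags n)"
  by (rule finite_subset[of _ "Pow ({1..n} \<times> {1..n})"]) (auto simp: dags_def)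

lemma layer_sizes_0: "layer_sizes n E 0 = card (srcs E {1..n})"
  by (simp add: layer_sizes_def layer_size_def root_layer_def)

lemma layer_sizes_0_le: "layer_sizes n E 0 \<le> n"
  unfolding layer_sizes_0 using card_mono[OF _ srcs_subset, of "{1..n}" E] by simp

section \<open>Invariance under relabelling\<close>

lemma srcs_map_prod_image:
  assumes "inj p"
  shows "srcs (map_prod p p ` E) (p ` R) = p ` srcs E R"
  using assms by (auto simp: srcs_def inj_eq)

lemma remaining_map_prod_image:
  assumes "p permutes {1..n}"
  shows "remaining n (map_prod p p ` E) i = p ` remaining n E i"
proof (induction i)
  case 0
  show ?case using permutes_image[OF assms] by simp
next
  case (Suc i)
  then show ?case by (simp add: srcs_map_prod_image permutes_inj[OF assms] image_set_diff)
qed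

lemma layer_sizes_map_prod_image:
  assumes "p permutes {1..n}"
  shows "layer_sizes n (map_prod p p ` E) = layer_sizes n E"
  using permutes_inj[OF assms]
  by (auto simp: layer_sizes_def layer_size_def root_layer_def remaining_map_prod_image[OF assms]
        srcs_map_prod_image card_image inj_on_subset)

lemma acyclic_map_prod_image:
  assumes "finite E" "acyclic E" "inj p"
  shows "acyclic (map_prod p p ` E)"
  using assms wf_map_prod_image[of E p] by (simp add: wf_iff_acyclic_if_finite)

lemma map_prod_image_dags:
  assumes "p permutes {1..n}" "E \<in> dags n"
  shows "map_prod p p ` E \<in> dags n"
proof -
  have "E \<subseteq> {1..n} \<times> {1..n}" "acyclic E" "finite E"
    using assms(2) finite_dags by (auto simp: dags_def finite_subset)
  moreover have "map_prod p p ` E \<subseteq> {1..n} \<times> {1..n}"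
    using \<open>E \<subseteq> {1..n} \<times> {1..n}\<close> permutes_in_image[OF assms(1)] by fastforce
  ultimately show ?thesis
    by (simp add: dags_def acyclic_map_prod_image permutes_inj[OF assms(1)])
qed

lemma bij_betw_map_prod_image_dags:
  assumes "p permutes {1..n}"
  shows "bij_betw (image (map_prod p p)) (dags n) (dags n)"
proof (rule bij_betw_byWitness[where f' = "image (map_prod (inv p) (inv p))"])
  have inv: "map_prod (inv p) (inv p) \<circ> map_prod p p = id" "map_prod p p \<circ> map_prod (inv p) (inv p) = id"
    using permutes_inv_o[OF assms] by (simp_all add: map_prod.comp prod.map_id0)
  show "\<forall>E\<in>dags n. map_prod (inv p) (inv p) ` map_prod p p ` E = E"
       "\<forall>E\<in>dags n. map_prod p p ` map_prod (inv p) (inv p) ` E = E"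
    by (simp_all add: image_comp inv)
  show "image (map_prod p p) ` dags n \<subseteq> dags n"
       "image (map_prod (inv p) (inv p)) ` dags n \<subseteq> dags n"
    using map_prod_image_dags assms permutes_inv[OF assms] by auto
qed

lemma dag_weight_map_prod_image:
  assumes "inj p"
  shows "dag_weight z w n (map_prod p p ` E) = dag_weight z w n E"
proof -
  have "inj (map_prod p p)"
    using map_prod_inj_on[OF assms assms] by simp
  then show ?thesis
    by (simp add: dag_weight_def card_image inj_on_subset)
qed

lemma permutes_exists_image:
  assumes "finite A" "S \<subseteq> A" "T \<subseteq> A" "card S = card T"
  obtains p where "p permutes A" "p ` S = T"
proof -
  have "finite S" "finite T" "finite (A - S)" "finite (A - T)"
    using assms by (auto intro: finite_subset)
  moreover have "card (A - S) = card (A - T)"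
    using assms by (simp add: card_Diff_subset finite_subset)
  ultimately obtain f g where f: "bij_betw f S T" and g: "bij_betw g (A - S) (A - T)"
    using assms(4) finite_same_card_bij by metis
  define p where "p x = (if x \<in> S then f x else if x \<in> A then g x else x)" for x
  have "bij_betw p S T"
    using f by (subst bij_betw_cong[where g = f]) (auto simp: p_def)
  moreover have "bij_betw p (A - S) (A - T)"
    using g by (subst bij_betw_cong[where g = g]) (auto simp: p_def)
  ultimately have "bij_betw p (S \<union> (A - S)) (T \<union> (A - T))"
    by (rule bij_betw_combine) auto
  then have "p permutes A"
    using assms(2,3) by (intro bij_imp_permutes) (auto simp: p_def Un_absorb1)
  with \<open>bij_betw p S T\<close> show thesis
    using that by (auto simp: bij_betw_def)
qed

lemma dag_mass_sources_card:
  assumes "S \<subseteq> {1..n}" "T \<subseteq> {1..n}" "card S = card T"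
  shows "dag_mass z w n (\<lambda>E. srcs E {1..n} = S \<and> Q (layer_sizes n E))
       = dag_mass z w n (\<lambda>E. srcs E {1..n} = T \<and> Q (layer_sizes n E))"
proof -
  obtain p where p: "p permutes {1..n}" "p ` S = T"
    using permutes_exists_image[OF _ assms] by blast
  have "srcs (map_prod p p ` E) {1..n} = T \<longleftrightarrow> srcs E {1..n} = S" for E
    using srcs_map_prod_image[OF permutes_inj[OF p(1)], of E "{1..n}"]
    unfolding permutes_image[OF p(1)] p(2)[symmetric]
    by (simp add: inj_image_eq_iff permutes_inj[OF p(1)])
  then have "bij_betw (image (map_prod p p))
      {E \<in> dags n. srcs E {1..n} = S \<and> Q (layer_sizes n E)}
      {E \<in> dags n. srcs E {1..n} = T \<and> Q (layer_sizes n E)}"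
    by (intro bij_betw_Collect[OF bij_betw_map_prod_image_dags[OF p(1)]])
       (simp add: layer_sizes_map_prod_image[OF p(1)])
  from sum.reindex_bij_betw[OF this, of "dag_weight z w n"] show ?thesis
    by (simp add: dag_mass_def dag_weight_map_prod_image permutes_inj[OF p(1)])
qed

section \<open>Adding a top layer\<close>

lemma remaining_Suc_top_sources:
  assumes "srcs E {1..a+r} = {r<..a+r}"
  shows "remaining (a+r) E (Suc i) = remaining r (E \<inter> {1..r} \<times> {1..r}) i"
proof (induction i)
  case 0
  have "{1..a+r} - {r<..a+r} = {1..r}" by auto
  with assms show ?case by simp
next
  case (Suc i)
  then show ?case
    using srcs_Int_Times[OF remaining_subset[of r "E \<inter> {1..r} \<times> {1..r}" i], of E] by simp
qed

lemma layer_sizes_Suc_top_sources: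
  assumes "srcs E {1..a+r} = {r<..a+r}"
  shows "layer_sizes (a+r) E (Suc i) = layer_sizes r (E \<inter> {1..r} \<times> {1..r}) i"
  using remaining_Suc_top_sources[OF assms, of i]
    srcs_Int_Times[OF remaining_subset[of r "E \<inter> {1..r} \<times> {1..r}" i], of E]
  by (simp add: layer_sizes_def layer_size_def root_layer_def)

text \<open>The admissible in-neighbourhoods in the new top layer \<open>{r<..a+r}\<close> of a vertex of
  \<open>H\<close>: a source of \<open>H\<close> must receive an edge, otherwise it would stay a source.\<close>

definition top_parent_sets :: "nat \<Rightarrow> nat \<Rightarrow> (nat \<times> nat) set \<Rightarrow> nat \<Rightarrow> nat set set" where
  "top_parent_sets a r H v =
     (if v \<in> srcs H {1..r} then Pow {r<..a+r} - {{}} else Pow {r<..a+r})"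

definition add_top_layer :: "nat \<Rightarrow> (nat \<times> nat) set \<Rightarrow> (nat \<Rightarrow> nat set) \<Rightarrow> (nat \<times> nat) set" where
  "add_top_layer r H f = H \<union> {(t, v). v \<in> {1..r} \<and> t \<in> f v}"

definition top_parents :: "nat \<Rightarrow> nat \<Rightarrow> (nat \<times> nat) set \<Rightarrow> nat \<Rightarrow> nat set" where
  "top_parents a r E = restrict (\<lambda>v. {t \<in> {r<..a+r}. (t, v) \<in> E}) {1..r}"

lemma acyclic_Un_bipartite:
  assumes "finite H" "finite X" "acyclic H" "H \<subseteq> U \<times> U" "X \<subseteq> T \<times> U" "T \<inter> U = {}"
  shows "acyclic (H \<union> X)"
proof -
  have "trans X"
    using assms(5,6) by (auto simp: trans_def)
  then have "acyclic X"
    using assms(5,6) by (auto simp: acyclic_def trancl_id)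
  then have "wf (X \<union> H)"
    using assms by (intro wf_Un) (auto simp: wf_iff_acyclic_if_finite)
  then show ?thesis
    by (simp add: wf_acyclic Un_commute)
qed

lemma top_parent_sets_subset:
  assumes "f \<in> PiE {1..r} (top_parent_sets a r H)" "v \<in> {1..r}"
  shows "f v \<subseteq> {r<..a+r}"
proof -
  have "f v \<in> top_parent_sets a r H v"
    using assms by (rule PiE_mem)
  then show ?thesis
    by (auto simp: top_parent_sets_def split: if_splits)
qed

lemma add_top_layer_in_dags:
  assumes H: "H \<in> dags r" and f: "f \<in> PiE {1..r} (top_parent_sets a r H)"
  shows "add_top_layer r H f \<in> dags (a+r)"
proof -
  define X where "X = {(t, v). v \<in> {1..r} \<and> t \<in> f v}"
  have HU: "H \<subseteq> {1..r} \<times> {1..r}" "acyclic H" "finite H"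
    using H finite_dags by (auto simp: dags_def finite_subset)
  have X: "X \<subseteq> {r<..a+r} \<times> {1..r}"
    using top_parent_sets_subset[OF f] by (auto simp: X_def)
  then have "finite X"
    by (rule finite_subset) simp
  have "acyclic (H \<union> X)"
    by (rule acyclic_Un_bipartite[OF HU(3) \<open>finite X\<close> HU(2,1) X]) auto
  moreover have "H \<union> X \<subseteq> {1..a+r} \<times> {1..a+r}"
    using HU(1) X by fastforce
  ultimately show ?thesis
    by (simp add: add_top_layer_def dags_def X_def)
qed

lemma srcs_add_top_layer:
  assumes H: "H \<subseteq> {1..r} \<times> {1..r}" and f: "f \<in> PiE {1..r} (top_parent_sets a r H)"
  shows "srcs (add_top_layer r H f) {1..a+r} = {r<..a+r}"
proof -
  define X where "X = {(t, v). v \<in> {1..r} \<and> t \<in> f v}"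
  have X: "X \<subseteq> {r<..a+r} \<times> {1..r}"
    using top_parent_sets_subset[OF f] by (auto simp: X_def)
  have "\<exists>u\<in>{1..a+r}. (u, v) \<in> H \<union> X" if "v \<in> {1..r}" for v
  proof (cases "v \<in> srcs H {1..r}")
    case True
    then have "f v \<noteq> {}"
      using f that by (auto simp: top_parent_sets_def dest: PiE_mem)
    then show ?thesis
      using that top_parent_sets_subset[OF f that] by (force simp: X_def)
  next
    case False
    then show ?thesis
      using that by (force simp: srcs_def)
  qed
  moreover have "v \<in> {1..r}" if "(u, v) \<in> H \<union> X" for u v
    using that H X by auto
  ultimately have "srcs (H \<union> X) {1..a+r} = {1..a+r} - {1..r}"
    unfolding srcs_def by (auto; blast)
  also have "\<dots> = {r<..a+r}"
    by auto
  finally show ?thesis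
    by (simp add: add_top_layer_def X_def)
qed

lemma add_top_layer_Int:
  assumes "H \<subseteq> {1..r} \<times> {1..r}" "f \<in> PiE {1..r} (top_parent_sets a r H)"
  shows "add_top_layer r H f \<inter> {1..r} \<times> {1..r} = H"
proof -
  have "t \<notin> {1..r}" if "v \<in> {1..r}" "t \<in> f v" for t v
    using top_parent_sets_subset[OF assms(2) that(1)] that(2) by auto
  then have X: "{(t, v). v \<in> {1..r} \<and> t \<in> f v} \<inter> {1..r} \<times> {1..r} = {}"
    by auto
  show ?thesis
    unfolding add_top_layer_def Int_Un_distrib2 X Int_absorb2[OF assms(1)] by (rule Un_empty_right)
qed

lemma top_parents_add_top_layer:
  assumes "H \<subseteq> {1..r} \<times> {1..r}" "f \<in> PiE {1..r} (top_parent_sets a r H)"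
  shows "top_parents a r (add_top_layer r H f) = f"
proof
  fix v
  show "top_parents a r (add_top_layer r H f) v = f v"
  proof (cases "v \<in> {1..r}")
    case True
    have not_H: "(t, v) \<notin> H" if "t \<in> {r<..a+r}" for t
      using that assms(1) by auto
    have "top_parents a r (add_top_layer r H f) v = {t \<in> {r<..a+r}. (t, v) \<in> H \<or> t \<in> f v}"
      using True by (simp add: top_parents_def add_top_layer_def)
    also have "\<dots> = {t \<in> {r<..a+r}. t \<in> f v}"
      using not_H by blast
    also have "\<dots> = f v"
      using top_parent_sets_subset[OF assms(2) True] by blast
    finally show ?thesis .
  next
    case False
    then show ?thesis
      using PiE_arb[OF assms(2) False] by (auto simp: top_parents_def)
  qed
qed

lemma top_sources_edge_target:
  assumes "E \<in> dags (a+r)" "srcs E {1..a+r} = {r<..a+r}" "(u, v) \<in> E"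
  shows "v \<in> {1..r}"
proof -
  have "u \<in> {1..a+r}" "v \<in> {1..a+r}"
    using assms(1,3) by (auto simp: dags_def)
  moreover from this(1) have "v \<notin> srcs E {1..a+r}"
    using assms(3) by (auto simp: srcs_def)
  ultimately show ?thesis
    using assms(2) by auto
qed

lemma Restr_in_dags: "acyclic E \<Longrightarrow> E \<inter> {1..r} \<times> {1..r} \<in> dags r"
  using acyclic_subset[of E] by (auto simp: dags_def)

lemma top_parents_mem:
  assumes E: "E \<in> dags (a+r)" and srcs: "srcs E {1..a+r} = {r<..a+r}"
  shows "top_parents a r E \<in> PiE {1..r} (top_parent_sets a r (E \<inter> {1..r} \<times> {1..r}))"
proof (rule PiE_I)
  fix v assume v: "v \<in> {1..r}"
  have "top_parents a r E v \<noteq> {}" if "v \<in> srcs (E \<inter> {1..r} \<times> {1..r}) {1..r}"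
  proof -
    have "v \<notin> srcs E {1..a+r}"
      using v srcs by auto
    then obtain u where "u \<in> {1..a+r}" "(u, v) \<in> E"
      using v by (auto simp: srcs_def)
    moreover have "u \<notin> {1..r}"
      using that \<open>(u, v) \<in> E\<close> by (auto simp: srcs_def)
    ultimately show ?thesis
      using v by (auto simp: top_parents_def)
  qed
  moreover have "top_parents a r E v \<in> Pow {r<..a+r}"
    using v by (auto simp: top_parents_def)
  ultimately show "top_parents a r E v \<in> top_parent_sets a r (E \<inter> {1..r} \<times> {1..r}) v"
    by (simp add: top_parent_sets_def)
qed (auto simp: top_parents_def)

lemma add_top_layer_top_parents:
  assumes E: "E \<subseteq> {1..a+r} \<times> {1..a+r}" and target: "\<And>u v. (u, v) \<in> E \<Longrightarrow> v \<in> {1..r}"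
  shows "add_top_layer r (E \<inter> {1..r} \<times> {1..r}) (top_parents a r E) = E"
proof (intro equalityI subsetI)
  fix e assume "e \<in> add_top_layer r (E \<inter> {1..r} \<times> {1..r}) (top_parents a r E)"
  then show "e \<in> E"
    by (auto simp: add_top_layer_def top_parents_def)
next
  fix e assume "e \<in> E"
  then obtain u v where e: "e = (u, v)" "(u, v) \<in> E"
    by (cases e) auto
  then have v: "v \<in> {1..r}" and u: "u \<in> {1..a+r}"
    using target E by auto
  show "e \<in> add_top_layer r (E \<inter> {1..r} \<times> {1..r}) (top_parents a r E)"
  proof (cases "u \<in> {1..r}")
    case True
    then show ?thesis
      using e v by (simp add: add_top_layer_def)
  next
    case False
    then have "u \<in> {r<..a+r}"
      using u by auto
    then show ?thesis
      using e v by (simp add: add_top_layer_def top_parents_def)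
  qed
qed

lemma bij_betw_add_top_layer:
  "bij_betw (\<lambda>(H, f). add_top_layer r H f)
     (SIGMA H:dags r. PiE {1..r} (top_parent_sets a r H))
     {E \<in> dags (a+r). srcs E {1..a+r} = {r<..a+r}}"
proof (rule bij_betwI[where g = "\<lambda>E. (E \<inter> {1..r} \<times> {1..r}, top_parents a r E)"])
  show "(\<lambda>(H, f). add_top_layer r H f) \<in> (SIGMA H:dags r. PiE {1..r} (top_parent_sets a r H))
      \<rightarrow> {E \<in> dags (a+r). srcs E {1..a+r} = {r<..a+r}}"
  proof
    fix Hf assume "Hf \<in> (SIGMA H:dags r. PiE {1..r} (top_parent_sets a r H))"
    then obtain H f where "Hf = (H, f)" and H: "H \<in> dags r" and f: "f \<in> PiE {1..r} (top_parent_sets a r H)"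
      by blast
    moreover have "H \<subseteq> {1..r} \<times> {1..r}"
      using H by (simp add: dags_def)
    ultimately show "(\<lambda>(H, f). add_top_layer r H f) Hf \<in> {E \<in> dags (a+r). srcs E {1..a+r} = {r<..a+r}}"
      using add_top_layer_in_dags[OF H f] srcs_add_top_layer[of H r f a] by simp
  qed
  show "(\<lambda>E. (E \<inter> {1..r} \<times> {1..r}, top_parents a r E)) \<in> {E \<in> dags (a+r). srcs E {1..a+r} = {r<..a+r}}
      \<rightarrow> (SIGMA H:dags r. PiE {1..r} (top_parent_sets a r H))"
  proof
    fix E assume "E \<in> {E \<in> dags (a+r). srcs E {1..a+r} = {r<..a+r}}"
    then have "E \<in> dags (a+r)" "srcs E {1..a+r} = {r<..a+r}"
      by auto
    with Restr_in_dags top_parents_mem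
    show "(E \<inter> {1..r} \<times> {1..r}, top_parents a r E) \<in> (SIGMA H:dags r. PiE {1..r} (top_parent_sets a r H))"
      by (auto simp: dags_def)
  qed
next
  fix Hf assume "Hf \<in> (SIGMA H:dags r. PiE {1..r} (top_parent_sets a r H))"
  then obtain H f where Hf: "Hf = (H, f)" "H \<in> dags r" and f: "f \<in> PiE {1..r} (top_parent_sets a r H)"
    by blast
  then have H: "H \<subseteq> {1..r} \<times> {1..r}"
    by (simp add: dags_def)
  show "(\<lambda>E. (E \<inter> {1..r} \<times> {1..r}, top_parents a r E)) ((\<lambda>(H, f). add_top_layer r H f) Hf) = Hf"
    using add_top_layer_Int[OF H f] top_parents_add_top_layer[OF H f] by (simp add: Hf)
next
  fix E assume "E \<in> {E \<in> dags (a+r). srcs E {1..a+r} = {r<..a+r}}"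
  then have "E \<in> dags (a+r)" "srcs E {1..a+r} = {r<..a+r}"
    by auto
  then have "add_top_layer r (E \<inter> {1..r} \<times> {1..r}) (top_parents a r E) = E"
    by (intro add_top_layer_top_parents top_sources_edge_target) (auto simp: dags_def)
  then show "(\<lambda>(H, f). add_top_layer r H f) (E \<inter> {1..r} \<times> {1..r}, top_parents a r E) = E"
    by simp
qed

lemma card_add_top_layer:
  assumes "H \<subseteq> {1..r} \<times> {1..r}" "f \<in> PiE {1..r} (top_parent_sets a r H)"
  shows "card (add_top_layer r H f) = card H + (\<Sum>v\<in>{1..r}. card (f v))"
proof -
  define X where "X = {(t, v). v \<in> {1..r} \<and> t \<in> f v}"
  have fin: "finite (f v)" if "v \<in> {1..r}" for v
    using top_parent_sets_subset[OF assms(2) that] by (rule finite_subset) simp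
  have X_eq: "X = (\<lambda>(v, t). (t, v)) ` Sigma {1..r} f"
    by (auto simp: X_def)
  then have "card X = card (Sigma {1..r} f)"
    by (simp add: card_image inj_on_def)
  also have "\<dots> = (\<Sum>v\<in>{1..r}. card (f v))"
    using fin by simp
  finally have "card X = (\<Sum>v\<in>{1..r}. card (f v))" .
  moreover have "H \<inter> X = {}"
    using assms(1) top_parent_sets_subset[OF assms(2)] by (fastforce simp: X_def)
  moreover have "finite H"
    using assms(1) by (rule finite_subset) simp
  moreover have "finite X"
    unfolding X_eq using fin by (intro finite_imageI finite_SigmaI) auto
  ultimately show ?thesis
    unfolding add_top_layer_def X_def[symmetric] by (simp add: card_Un_disjoint)
qed

section \<open>Peeling off the first layer\<close>

lemma sum_power_card_Pow:
  fixes w :: "'a::comm_semiring_1"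
  assumes "finite A"
  shows "(\<Sum>X\<in>Pow A. w ^ card X) = (1 + w) ^ card A"
  using prod_add[OF assms, of "\<lambda>_. w" "\<lambda>_. 1"] by (simp add: add.commute)

lemma sum_top_parent_weights:
  fixes w :: "'a::comm_ring_1" and H :: "(nat \<times> nat) set" and a r :: nat
  defines "s \<equiv> card (srcs H {1..r})"
  shows "(\<Sum>f\<in>PiE {1..r} (top_parent_sets a r H). \<Prod>v\<in>{1..r}. w ^ card (f v))
       = ((1 + w) ^ a - 1) ^ s * ((1 + w) ^ a) ^ (r - s)"
proof -
  have "(\<Sum>f\<in>PiE {1..r} (top_parent_sets a r H). \<Prod>v\<in>{1..r}. w ^ card (f v))
      = (\<Prod>v\<in>{1..r}. \<Sum>Y\<in>top_parent_sets a r H v. w ^ card Y)"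
    by (rule prod_sum_PiE[symmetric]) (auto simp: top_parent_sets_def)
  also have "\<dots> = (\<Prod>v\<in>{1..r}. if v \<in> srcs H {1..r} then (1 + w) ^ a - 1 else (1 + w) ^ a)"
    by (rule prod.cong) (simp_all add: top_parent_sets_def sum_diff1 sum_power_card_Pow)
  also have "\<dots> = ((1 + w) ^ a - 1) ^ card ({1..r} \<inter> srcs H {1..r})
                  * ((1 + w) ^ a) ^ card ({1..r} - srcs H {1..r})"
    by (simp add: prod.If_cases Diff_eq)
  also have "{1..r} \<inter> srcs H {1..r} = srcs H {1..r}"
    using srcs_subset by blast
  also have "card ({1..r} - srcs H {1..r}) = r - s"
    by (simp add: s_def card_Diff_subset srcs_subset finite_subset[OF srcs_subset])
  finally show ?thesis
    by (simp add: s_def)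
qed

lemma choose_two_add: "(a + r) choose 2 = (a choose 2) + (r choose 2) + a * r"
  by (induction r) (simp_all add: numeral_2_eq_2)

text \<open>The probability that a fixed vertex receives an edge from a layer of \<open>a\<close> vertices
  when every edge is present independently with probability \<open>w / (1 + w)\<close>.\<close>

definition cover_prob :: "real \<Rightarrow> nat \<Rightarrow> real" where
  "cover_prob w a = ((1 + w) ^ a - 1) / (1 + w) ^ a"

lemma top_layer_weight_factor:
  fixes z w :: real
  assumes "1 + w \<noteq> 0" "s \<le> r"
  shows "real ((a + r) choose a) * (z ^ (a + r) * w ^ c / ((1 + w) ^ ((a + r) choose 2) * fact (a + r)))
           * (((1 + w) ^ a - 1) ^ s * ((1 + w) ^ a) ^ (r - s))
       = dag_weight z w a {} * cover_prob w a ^ s * (z ^ r * w ^ c / ((1 + w) ^ (r choose 2) * fact r))"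
proof -
  have "real ((a + r) choose a) = fact (a + r) / (fact a * fact r)"
    by (subst binomial_fact) auto
  moreover have "((1 + w) ^ a) ^ (r - s) = ((1 + w) ^ a) ^ r / ((1 + w) ^ a) ^ s"
    using assms by (simp add: power_diff)
  moreover have "(1 + w) ^ ((a + r) choose 2) = (1 + w) ^ (a choose 2) * (1 + w) ^ (r choose 2) * ((1 + w) ^ a) ^ r"
    by (simp add: choose_two_add power_add power_mult)
  ultimately show ?thesis
    using assms(1) by (simp add: dag_weight_def cover_prob_def field_simps power_divide power_add)
qed

lemma dag_mass_top_sources_reindex:
  "dag_mass z w (a + r) (\<lambda>E. srcs E {1..a+r} = {r<..a+r} \<and> P (\<lambda>i. layer_sizes (a + r) E (Suc i)))
   = (\<Sum>(H, f)\<in>(SIGMA H:{H \<in> dags r. P (layer_sizes r H)}. PiE {1..r} (top_parent_sets a r H)).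
        dag_weight z w (a + r) (add_top_layer r H f))"
proof -
  let ?F = "\<lambda>H. PiE {1..r} (top_parent_sets a r H)"
  have layers: "P (\<lambda>i. layer_sizes (a + r) (add_top_layer r H f) (Suc i)) \<longleftrightarrow> P (layer_sizes r H)"
    if "(H, f) \<in> (SIGMA H:dags r. ?F H)" for H f
  proof -
    have H: "H \<subseteq> {1..r} \<times> {1..r}" and f: "f \<in> ?F H"
      using that by (auto simp: dags_def)
    have "layer_sizes (a + r) (add_top_layer r H f) (Suc i)
        = layer_sizes r (add_top_layer r H f \<inter> {1..r} \<times> {1..r}) i" for i
      by (rule layer_sizes_Suc_top_sources[OF srcs_add_top_layer[OF H f]])
    then show ?thesis
      unfolding add_top_layer_Int[OF H f] by simp
  qed
  have "bij_betw (\<lambda>(H, f). add_top_layer r H f) {x \<in> SIGMA H:dags r. ?F H. P (layer_sizes r (fst x))}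
     {E \<in> {E \<in> dags (a + r). srcs E {1..a+r} = {r<..a+r}}. P (\<lambda>i. layer_sizes (a + r) E (Suc i))}"
    using layers by (intro bij_betw_Collect[OF bij_betw_add_top_layer]) auto
  moreover have "{x \<in> SIGMA H:dags r. ?F H. P (layer_sizes r (fst x))}
      = (SIGMA H:{H \<in> dags r. P (layer_sizes r H)}. ?F H)"
    by auto
  ultimately show ?thesis
    unfolding dag_mass_def by (simp add: sum.reindex_bij_betw[symmetric] case_prod_unfold conj_assoc)
qed

lemma dag_mass_top_sources:
  fixes z w :: real
  assumes "1 + w \<noteq> 0"
  shows "real ((a + r) choose a)
           * dag_mass z w (a + r) (\<lambda>E. srcs E {1..a+r} = {r<..a+r} \<and> P (\<lambda>i. layer_sizes (a + r) E (Suc i)))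
       = dag_weight z w a {}
           * (\<Sum>H\<in>{H \<in> dags r. P (layer_sizes r H)}. cover_prob w a ^ layer_sizes r H 0 * dag_weight z w r H)"
proof -
  let ?S = "{H \<in> dags r. P (layer_sizes r H)}"
  let ?F = "\<lambda>H. PiE {1..r} (top_parent_sets a r H)"
  let ?D = "(1 + w) ^ ((a + r) choose 2) * fact (a + r) :: real"
  have "dag_mass z w (a + r) (\<lambda>E. srcs E {1..a+r} = {r<..a+r} \<and> P (\<lambda>i. layer_sizes (a + r) E (Suc i)))
      = (\<Sum>(H, f)\<in>(SIGMA H:?S. ?F H). dag_weight z w (a + r) (add_top_layer r H f))"
    by (rule dag_mass_top_sources_reindex)
  also have "\<dots> = (\<Sum>H\<in>?S. \<Sum>f\<in>?F H. z ^ (a + r) * w ^ card H / ?D * (\<Prod>v\<in>{1..r}. w ^ card (f v)))"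
    by (subst sum.Sigma) (auto simp: finite_dags finite_PiE top_parent_sets_def dag_weight_def
        card_add_top_layer dags_def power_add power_sum intro!: sum.cong)
  also have "\<dots> = (\<Sum>H\<in>?S. z ^ (a + r) * w ^ card H / ?D * (\<Sum>f\<in>?F H. \<Prod>v\<in>{1..r}. w ^ card (f v)))"
    by (simp only: sum_distrib_left)
  also have "\<dots> = (\<Sum>H\<in>?S. z ^ (a + r) * w ^ card H / ?D
                     * (((1 + w) ^ a - 1) ^ layer_sizes r H 0 * ((1 + w) ^ a) ^ (r - layer_sizes r H 0)))"
    by (simp only: sum_top_parent_weights layer_sizes_0)
  finally have mass: "dag_mass z w (a + r)
      (\<lambda>E. srcs E {1..a+r} = {r<..a+r} \<and> P (\<lambda>i. layer_sizes (a + r) E (Suc i))) = \<dots>" .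
  show ?thesis
    unfolding mass sum_distrib_left
  proof (rule sum.cong[OF refl])
    fix H
    show "real ((a + r) choose a) * (z ^ (a + r) * w ^ card H / ?D
            * (((1 + w) ^ a - 1) ^ layer_sizes r H 0 * ((1 + w) ^ a) ^ (r - layer_sizes r H 0)))
        = dag_weight z w a {} * (cover_prob w a ^ layer_sizes r H 0 * dag_weight z w r H)"
      using top_layer_weight_factor[OF assms layer_sizes_0_le[of r H], where a = a and z = z and c = "card H"]
      by (simp add: dag_weight_def mult.assoc)
  qed
qed

lemma dag_mass_first_layer:
  fixes z w :: real
  assumes "1 + w \<noteq> 0"
  shows "dag_mass z w n (\<lambda>E. layer_sizes n E 0 = a \<and> P (\<lambda>i. layer_sizes n E (Suc i)))
       = (if a \<le> n then dag_weight z w a {}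
            * (\<Sum>H\<in>{H \<in> dags (n - a). P (layer_sizes (n - a) H)}.
                 cover_prob w a ^ layer_sizes (n - a) H 0 * dag_weight z w (n - a) H)
          else 0)"
proof (cases "a \<le> n")
  case False
  then have empty: "{E \<in> dags n. layer_sizes n E 0 = a \<and> P (\<lambda>i. layer_sizes n E (Suc i))} = {}"
    using layer_sizes_0_le[of n] by fastforce
  with False show ?thesis
    unfolding dag_mass_def empty by simp
next
  case True
  then obtain r where n: "n = a + r"
    using le_Suc_ex by blast
  define Q where "Q g \<longleftrightarrow> P (\<lambda>i. g (Suc i))" for g :: "nat \<Rightarrow> nat"
  let ?sources = "{S. S \<subseteq> {1..n} \<and> card S = a}"
  let ?mass = "\<lambda>S. dag_mass z w n (\<lambda>E. srcs E {1..n} = S \<and> Q (layer_sizes n E))"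
  have "dag_mass z w n (\<lambda>E. layer_sizes n E 0 = a \<and> P (\<lambda>i. layer_sizes n E (Suc i)))
      = (\<Sum>S\<in>?sources. ?mass S)"
    unfolding dag_mass_def
    by (subst sum.group[symmetric, where g = "\<lambda>E. srcs E {1..n}" and T = ?sources])
       (auto simp: finite_dags layer_sizes_0 Q_def dest: srcs_subset[THEN subsetD] intro!: sum.cong)
  also have "\<dots> = (\<Sum>S\<in>?sources. ?mass {r<..a+r})"
    by (intro sum.cong refl dag_mass_sources_card) (auto simp: n)
  also have "\<dots> = real (n choose a) * ?mass {r<..a+r}"
    by (simp add: n_subsets)
  also have "\<dots> = dag_weight z w a {}
      * (\<Sum>H\<in>{H \<in> dags r. P (layer_sizes r H)}. cover_prob w a ^ layer_sizes r H 0 * dag_weight z w r H)"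
    unfolding n Q_def by (rule dag_mass_top_sources[OF assms])
  finally show ?thesis
    using True by (simp add: n)
qed

lemma dag_mass_layer_prefix:
  fixes z w :: real
  assumes "1 + w \<noteq> 0"
  shows "\<exists>C s. \<forall>n R.
           dag_mass z w n (\<lambda>E. (\<forall>i<Suc j. layer_sizes n E i = ns i) \<and> R (\<lambda>i. layer_sizes n E (i + j)))
         = (if s \<le> n
            then C * dag_mass z w (n - s) (\<lambda>H. layer_sizes (n - s) H 0 = ns j \<and> R (layer_sizes (n - s) H))
            else 0)"
proof (induction j arbitrary: ns)
  case 0
  show ?case
    by (rule exI[of _ 1], rule exI[of _ 0]) simp
next
  case (Suc j)
  obtain C s where IH: "\<And>n R.
      dag_mass z w n (\<lambda>E. (\<forall>i<Suc j. layer_sizes n E i = ns (Suc i)) \<and> R (\<lambda>i. layer_sizes n E (i + j)))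
    = (if s \<le> n
       then C * dag_mass z w (n - s) (\<lambda>H. layer_sizes (n - s) H 0 = ns (Suc j) \<and> R (layer_sizes (n - s) H))
       else 0)"
    using Suc.IH[of "\<lambda>i. ns (Suc i)"] by blast
  let ?C = "dag_weight z w (ns 0) {} * cover_prob w (ns 0) ^ ns 1 * C"
  have "dag_mass z w n (\<lambda>E. (\<forall>i<Suc (Suc j). layer_sizes n E i = ns i) \<and> R (\<lambda>i. layer_sizes n E (i + Suc j)))
      = (if ns 0 + s \<le> n
         then ?C * dag_mass z w (n - (ns 0 + s))
                (\<lambda>H. layer_sizes (n - (ns 0 + s)) H 0 = ns (Suc j) \<and> R (layer_sizes (n - (ns 0 + s)) H))
         else 0)" for n R
  proof -
    define P where "P g \<longleftrightarrow> (\<forall>i<Suc j. g i = ns (Suc i)) \<and> R (\<lambda>i. g (i + j))" for g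
    let ?m = "n - ns 0"
    have "dag_mass z w n (\<lambda>E. (\<forall>i<Suc (Suc j). layer_sizes n E i = ns i) \<and> R (\<lambda>i. layer_sizes n E (i + Suc j)))
        = dag_mass z w n (\<lambda>E. layer_sizes n E 0 = ns 0 \<and> P (\<lambda>i. layer_sizes n E (Suc i)))"
      by (simp add: All_less_Suc2 P_def conj_assoc)
    also have "\<dots> = (if ns 0 \<le> n then dag_weight z w (ns 0) {}
        * (\<Sum>H\<in>{H \<in> dags ?m. P (layer_sizes ?m H)}. cover_prob w (ns 0) ^ layer_sizes ?m H 0 * dag_weight z w ?m H)
        else 0)"
      by (rule dag_mass_first_layer[OF assms])
    also have "(\<Sum>H\<in>{H \<in> dags ?m. P (layer_sizes ?m H)}. cover_prob w (ns 0) ^ layer_sizes ?m H 0 * dag_weight z w ?m H)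
        = cover_prob w (ns 0) ^ ns 1 * dag_mass z w ?m (\<lambda>H. P (layer_sizes ?m H))"
      unfolding dag_mass_def sum_distrib_left by (rule sum.cong) (auto simp: P_def)
    also have "dag_mass z w ?m (\<lambda>H. P (layer_sizes ?m H))
        = (if s \<le> ?m
           then C * dag_mass z w (?m - s) (\<lambda>H. layer_sizes (?m - s) H 0 = ns (Suc j) \<and> R (layer_sizes (?m - s) H))
           else 0)"
      unfolding P_def by (rule IH)
    finally show ?thesis
      by (auto simp: diff_diff_left)
  qed
  then show ?case
    by blast
qed

section \<open>Summing over the number of vertices\<close>

lemma dag_weight_nonneg: "0 \<le> z \<Longrightarrow> 0 \<le> w \<Longrightarrow> 0 \<le> dag_weight z w n E"
  by (simp add: dag_weight_def)

lemma summable_dag_mass: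
  assumes "0 \<le> z" "0 \<le> w" "DAG_finite z w"
  shows "summable (\<lambda>n. dag_mass z w n (P n))"
proof (rule summable_comparison_test')
  show "summable (\<lambda>n. \<Sum>E\<in>dags n. dag_weight z w n E)"
    using assms(3) by (simp add: DAG_finite_def)
  fix n
  have "0 \<le> dag_mass z w n (P n)"
    unfolding dag_mass_def by (rule sum_nonneg) (simp add: dag_weight_nonneg assms)
  moreover have "dag_mass z w n (P n) \<le> (\<Sum>E\<in>dags n. dag_weight z w n E)"
    unfolding dag_mass_def by (rule sum_mono2) (auto simp: finite_dags dag_weight_nonneg assms)
  ultimately show "norm (dag_mass z w n (P n)) \<le> (\<Sum>E\<in>dags n. dag_weight z w n E)"
    by simp
qed

lemma suminf_delay:
  fixes f :: "nat \<Rightarrow> 'a::real_normed_algebra"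
  assumes "summable f"
  shows "(\<Sum>n. if s \<le> n then c * f (n - s) else 0) = c * suminf f"
proof -
  have "(\<lambda>n. c * f n) sums (c * suminf f)"
    using assms by (intro sums_mult) (simp add: summable_sums)
  then have "(\<lambda>n. if s \<le> n + s then c * f (n + s - s) else 0) sums (c * suminf f)"
    by simp
  then show ?thesis
    by (subst (asm) sums_iff_shift) (simp add: sums_iff)
qed

lemma event_mass_layer_prefix:
  fixes z w :: real
  assumes "0 \<le> z" "0 \<le> w" "DAG_finite z w"
  shows "\<exists>C. \<forall>R.
           event_mass z w (\<lambda>n E. (\<forall>i<Suc j. layer_sizes n E i = ns i) \<and> R (\<lambda>i. layer_sizes n E (i + j)))
         = C * event_mass z w (\<lambda>n H. layer_sizes n H 0 = ns j \<and> R (layer_sizes n H))"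
proof -
  obtain C s where prefix: "\<And>n R.
      dag_mass z w n (\<lambda>E. (\<forall>i<Suc j. layer_sizes n E i = ns i) \<and> R (\<lambda>i. layer_sizes n E (i + j)))
    = (if s \<le> n
       then C * dag_mass z w (n - s) (\<lambda>H. layer_sizes (n - s) H 0 = ns j \<and> R (layer_sizes (n - s) H))
       else 0)"
    using dag_mass_layer_prefix[of w z j ns] assms(2) by auto
  have "event_mass z w (\<lambda>n E. (\<forall>i<Suc j. layer_sizes n E i = ns i) \<and> R (\<lambda>i. layer_sizes n E (i + j)))
      = C * event_mass z w (\<lambda>n H. layer_sizes n H 0 = ns j \<and> R (layer_sizes n H))" for R
    unfolding event_mass_def dag_mass_def[symmetric] prefix
    by (rule suminf_delay[OF summable_dag_mass[OF assms]])
  then show ?thesis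
    by blast
qed

theorem lemma1:
  fixes z w :: real and k :: nat and ns :: "nat \<Rightarrow> nat" and m :: nat
  assumes "z > 0" and "w > 0" and "DAG_finite z w" and "k \<ge> 1"
    and "\<forall>i\<in>{1..k}. ns i > 0"
    and "dag_prob z w (\<lambda>n E. \<forall>i\<in>{1..k}. layer_size n E i = ns i) > 0"
  shows "dag_cond_prob z w (\<lambda>n E. layer_size n E (k + 1) = m)
                           (\<lambda>n E. \<forall>i\<in>{1..k}. layer_size n E i = ns i)
       = dag_cond_prob z w (\<lambda>n E. layer_size n E 2 = m)
                           (\<lambda>n E. layer_size n E 1 = ns k)"
proof -
  obtain j where k: "k = Suc j"
    using assms(4) by (cases k) auto
  obtain C where mass: "\<And>R.
      event_mass z w (\<lambda>n E. (\<forall>i<Suc j. layer_sizes n E i = ns (Suc i)) \<and> R (\<lambda>i. layer_sizes n E (i + j)))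
    = C * event_mass z w (\<lambda>n H. layer_sizes n H 0 = ns k \<and> R (layer_sizes n H))"
    using event_mass_layer_prefix[of z w j "\<lambda>i. ns (Suc i)"] assms(1-3) k by auto
  have prefix_iff: "(\<forall>i\<in>{1..k}. layer_size n E i = ns i) \<longleftrightarrow> (\<forall>i<Suc j. layer_sizes n E i = ns (Suc i))"
    for n E
    unfolding k layer_sizes_def image_Suc_lessThan[symmetric] by auto
  have "event_mass z w (\<lambda>n E. \<forall>i\<in>{1..k}. layer_size n E i = ns i)
      = C * event_mass z w (\<lambda>n E. layer_size n E 1 = ns k)"
    using mass[of "\<lambda>_. True"] unfolding prefix_iff by (simp add: layer_sizes_def)
  moreover have "event_mass z w (\<lambda>n E. layer_size n E (k + 1) = m \<and> (\<forall>i\<in>{1..k}. layer_size n E i = ns i))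
      = C * event_mass z w (\<lambda>n E. layer_size n E 2 = m \<and> layer_size n E 1 = ns k)"
    using mass[of "\<lambda>g. g 1 = m"] unfolding prefix_iff
    by (simp add: layer_sizes_def k numeral_2_eq_2 conj_commute)
  moreover have "C \<noteq> 0" "DAG_gf z w \<noteq> 0"
    using assms(6) calculation(1) by (auto simp: dag_prob_def)
  ultimately show ?thesis
    by (simp add: dag_cond_prob_def dag_prob_def)
qed

end
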